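(* Let $F_N(t)$ be a solution of the thermostatted Kac master equation with finite second moments. Then the first moments $d_k(t)=\int_{\mathbb{R}^N}v_kF_N(t,v)\,dv$ converge to $0$ exponentially fast with a rate strictly greater than $\mu/2$, and the mixed second moments $d_{k,l}(t)=\int_{\mathbb{R}^N}v_kv_lF_N(t,v)\,dv$, $k\neq l$, also converge to $0$ exponentially fast with a rate strictly greater than $\mu/2$.
   Context: Fix $N\ge2$, rates $\lambda>0,\mu>0$ and a probability density $g$ on $\mathbb{R}$ with $g\in L^2$, zero mean and finite second moment. The master equation is $\partial_t F_N=-\lambda N(I-Q)[F_N]-\mu\sum_{j=1}^N(I-R_j)[F_N]$, with $Q[F](v)=\binom{N}{2}^{-1}\sum_{i<j}\frac{1}{2\pi}\int_0^{2\pi}F(v_{ij}(\theta))d\theta$ and $R_j[F](v)=\int_{\mathbb{R}}\frac{1}{2\pi}\int_0^{2\pi}g(w\cos\theta-v_j\sin\theta)F(v_j(w,\theta))d\theta dw$, where $v_{ij}(\theta)$ replaces $(v_i,v_j)$ by $(v_i\cos\theta+v_j\sin\theta,-v_i\sin\theta+v_j\cos\theta)$ and $v_j(w,\theta)$ replaces $v_j$ by $v_j\cos\theta+w\sin\theta$. *)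

theory Defs
  imports "HOL-Analysis.Analysis"
begin

text \<open>Velocities are vectors in R^N, N = CARD('n); the index type carries a linear
order so that the sum over pairs i < j makes sense.\<close>

definition upd2 :: "real^'n \<Rightarrow> 'n \<Rightarrow> 'n \<Rightarrow> real \<Rightarrow> real \<Rightarrow> real^'n" where
  "upd2 v i j a b = (\<chi> k. if k = i then a else if k = j then b else v $ k)"

definition upd1 :: "real^'n \<Rightarrow> 'n \<Rightarrow> real \<Rightarrow> real^'n" where
  "upd1 v j a = (\<chi> k. if k = j then a else v $ k)"

definition rot_ij :: "real^'n \<Rightarrow> 'n \<Rightarrow> 'n \<Rightarrow> real \<Rightarrow> real^'n" where
  "rot_ij v i j \<theta> =
     upd2 v i j (v $ i * cos \<theta> + v $ j * sin \<theta>) (- v $ i * sin \<theta> + v $ j * cos \<theta>)"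

definition thermo_j :: "real^'n \<Rightarrow> 'n \<Rightarrow> real \<Rightarrow> real \<Rightarrow> real^'n" where
  "thermo_j v j w \<theta> = upd1 v j (v $ j * cos \<theta> + w * sin \<theta>)"

definition kacQ :: "(real^'n::{finite,linorder} \<Rightarrow> real) \<Rightarrow> real^'n::{finite,linorder} \<Rightarrow> real" where
  "kacQ F v = (1 / real (CARD('n) choose 2)) *
     (\<Sum>(i,j)\<in>{(i,j). i < j}.
        (1 / (2*pi)) * (LINT \<theta>:{0..2*pi}|lborel. F (rot_ij v i j \<theta>)))"

definition thermoR :: "(real \<Rightarrow> real) \<Rightarrow> 'n \<Rightarrow> (real^'n \<Rightarrow> real) \<Rightarrow> real^'n \<Rightarrow> real" where
  "thermoR g j F v = (LINT w|lborel.
     (1 / (2*pi)) * (LINT \<theta>:{0..2*pi}|lborel.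
        g (w * cos \<theta> - v $ j * sin \<theta>) * F (thermo_j v j w \<theta>)))"

definition kac_gen :: "real \<Rightarrow> real \<Rightarrow> (real \<Rightarrow> real) \<Rightarrow>
    (real^'n::{finite,linorder} \<Rightarrow> real) \<Rightarrow> real^'n::{finite,linorder} \<Rightarrow> real" where
  "kac_gen lam \<mu> g F v =
     - lam * real CARD('n) * (F v - kacQ F v) - \<mu> * (\<Sum>j\<in>UNIV. F v - thermoR g j F v)"

definition thermostat_density :: "(real \<Rightarrow> real) \<Rightarrow> bool" where
  "thermostat_density g \<longleftrightarrow>
     (\<forall>x. 0 \<le> g x) \<and> integrable lborel g \<and> (LINT x|lborel. g x) = 1 \<and>
     integrable lborel (\<lambda>x. (g x)\<^sup>2) \<and>
     integrable lborel (\<lambda>x. x * g x) \<and> (LINT x|lborel. x * g x) = 0 \<and>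
     integrable lborel (\<lambda>x. x\<^sup>2 * g x)"

text \<open>Solution with finite second moments: for t \<ge> 0, F t is a probability density
  with finite second moment, and t \<mapsto> F t is differentiable (right-differentiable at 0)
  in the weighted space L^1((1+|v|^2) dv), with derivative given by the master equation.\<close>
definition kac_solution :: "real \<Rightarrow> real \<Rightarrow> (real \<Rightarrow> real) \<Rightarrow>
    (real \<Rightarrow> real^'n::{finite,linorder} \<Rightarrow> real) \<Rightarrow> bool" where
  "kac_solution lam \<mu> g F \<longleftrightarrow>
     (\<forall>t\<ge>0. (\<forall>v. 0 \<le> F t v) \<and> integrable lborel (F t) \<and> (LINT v|lborel. F t v) = 1 \<and>
        integrable lborel (\<lambda>v. (norm v)\<^sup>2 * F t v) \<and>
        integrable lborel (\<lambda>v. (1 + (norm v)\<^sup>2) * kac_gen lam \<mu> g (F t) v) \<and>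
        ((\<lambda>s. (LINT v|lborel. (1 + (norm v)\<^sup>2) *
                 \<bar>F s v - F t v - (s - t) * kac_gen lam \<mu> g (F t) v\<bar>) / \<bar>s - t\<bar>)
           \<longlongrightarrow> 0) (at t within {0..}))"

end

theory Submission
  imports Defs
begin

text \<open>
  Both collision operators average over rotations in coordinate planes: Q rotates the pair
  (v_i, v_j), and R_j rotates (v_j, w) in \<real>^N \<times> \<real>, where the extra coordinate w carries the
  thermostat density g. Plane rotations preserve Lebesgue measure (they are products of three
  shears), so by Fubini, testing Q[F] or R_j[F] against v_k, or against v_k v_l with k \<noteq> l,
  amounts to averaging the rotated test function over the angle. Only the constant term of its
  trigonometric expansion survives, and it vanishes as soon as the rotated plane meets the set S
  of indices of the test function. Hence the first moments and the mixed second moments obey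
  closed linear equations m' = - c m with c = \<lambda> N (1 - p_S) + \<mu> |S| \<ge> \<mu> > \<mu>/2, where p_S is
  the fraction of pairs i < j avoiding S.
\<close>

section \<open>Plane rotations preserve Lebesgue measure\<close>

definition shear :: "'a::euclidean_space \<Rightarrow> 'a \<Rightarrow> real \<Rightarrow> 'a \<Rightarrow> 'a" where
  "shear b1 b2 a x = x + (a * (x \<bullet> b2)) *\<^sub>R b1"

definition plane_rot :: "'a::euclidean_space \<Rightarrow> 'a \<Rightarrow> real \<Rightarrow> 'a \<Rightarrow> 'a" where
  "plane_rot b1 b2 \<theta> x = x + ((cos \<theta> - 1) * (x \<bullet> b1) + sin \<theta> * (x \<bullet> b2)) *\<^sub>R b1
                            + (- sin \<theta> * (x \<bullet> b1) + (cos \<theta> - 1) * (x \<bullet> b2)) *\<^sub>R b2"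

lemma shear_measurable [measurable]: "shear b1 b2 a \<in> borel_measurable borel"
  unfolding shear_def by measurable

lemma plane_rot_measurable [measurable]: "plane_rot b1 b2 \<theta> \<in> borel_measurable borel"
  unfolding plane_rot_def by measurable

lemma inner_shear:
  assumes "b1 \<in> Basis" "b2 \<in> Basis" "b1 \<noteq> b2" "b \<in> Basis"
  shows "shear b1 b2 a x \<bullet> b = (if b = b1 then x \<bullet> b1 + a * (x \<bullet> b2) else x \<bullet> b)"
  using assms by (auto simp: shear_def inner_add_left inner_Basis)

lemma inner_plane_rot:
  assumes "b1 \<in> Basis" "b2 \<in> Basis" "b1 \<noteq> b2" "b \<in> Basis"
  shows "plane_rot b1 b2 \<theta> x \<bullet> b =
    (if b = b1 then cos \<theta> * (x \<bullet> b1) + sin \<theta> * (x \<bullet> b2)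
     else if b = b2 then - sin \<theta> * (x \<bullet> b1) + cos \<theta> * (x \<bullet> b2) else x \<bullet> b)"
  using assms by (auto simp: plane_rot_def inner_add_left inner_Basis algebra_simps)

lemma plane_rot_plane_rot:
  assumes "b1 \<in> Basis" "b2 \<in> Basis" "b1 \<noteq> b2"
  shows "plane_rot b1 b2 \<alpha> (plane_rot b1 b2 \<beta> x) = plane_rot b1 b2 (\<alpha> + \<beta>) x"
  by (rule euclidean_eqI)
    (use assms in \<open>auto simp: inner_plane_rot cos_add sin_add algebra_simps\<close>)

lemma plane_rot_zero: "plane_rot b1 b2 0 x = x"
  by (simp add: plane_rot_def)

lemma plane_rot_inverse:
  assumes "b1 \<in> Basis" "b2 \<in> Basis" "b1 \<noteq> b2"
  shows "plane_rot b1 b2 (- \<theta>) (plane_rot b1 b2 \<theta> x) = x"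
  using plane_rot_plane_rot[OF assms] by (simp add: plane_rot_zero)

text \<open>In the \<open>b1\<close>-coordinate a shear is a translation, so integrate that coordinate first.\<close>

lemma nn_integral_shear:
  fixes h :: "'a::euclidean_space \<Rightarrow> ennreal"
  assumes b1: "b1 \<in> Basis" and b2: "b2 \<in> Basis" and ne: "b1 \<noteq> b2"
    and [measurable]: "h \<in> borel_measurable borel"
  shows "(\<integral>\<^sup>+x. h (shear b1 b2 a x) \<partial>lborel) = (\<integral>\<^sup>+x. h x \<partial>lborel)"
proof -
  interpret product_sigma_finite "\<lambda>_. lborel::real measure" by standard
  define \<Phi> where "\<Phi> = (\<lambda>f::'a\<Rightarrow>real. \<Sum>b\<in>Basis. f b *\<^sub>R b)"
  have [measurable]: "\<Phi> \<in> borel_measurable (\<Pi>\<^sub>M b\<in>Basis. lborel)"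
    unfolding \<Phi>_def by measurable
  define I where "I = Basis - {b1}"
  have I: "Basis = insert b1 I" "finite I" "b1 \<notin> I"
    using b1 by (auto simp: I_def)
  have \<Phi>_upd: "\<Phi> (f(b1 := y)) = \<Phi> f + (y - f b1) *\<^sub>R b1" for f y
  proof -
    have "\<Phi> (f(b1 := y)) = (\<Sum>b\<in>Basis. f b *\<^sub>R b + (if b = b1 then (y - f b1) *\<^sub>R b1 else 0))"
      unfolding \<Phi>_def by (intro sum.cong) (auto simp: scaleR_diff_left)
    then show ?thesis
      unfolding \<Phi>_def using b1 by (simp add: sum.distrib)
  qed
  have shear_\<Phi>: "shear b1 b2 a (\<Phi> f) = \<Phi> (f(b1 := f b1 + a * f b2))" for f
  proof -
    have "\<Phi> f \<bullet> b2 = f b2"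
      unfolding \<Phi>_def using b2 by (simp add: inner_sum_left inner_Basis if_distrib cong: if_cong)
    then show ?thesis by (simp add: shear_def \<Phi>_upd)
  qed
  have fiber: "(\<integral>\<^sup>+y. h (\<Phi> (f(b1 := y + a * f b2))) \<partial>lborel) = (\<integral>\<^sup>+y. h (\<Phi> (f(b1 := y))) \<partial>lborel)"
    for f
    using nn_integral_real_affine[where c=1 and t="a * f b2" and f="\<lambda>y. h (\<Phi> (f(b1 := y)))"]
    by (simp add: \<Phi>_upd add.commute)
  have "(\<integral>\<^sup>+x. h (shear b1 b2 a x) \<partial>lborel)
      = (\<integral>\<^sup>+f. h (\<Phi> (f(b1 := f b1 + a * f b2))) \<partial>(\<Pi>\<^sub>M b\<in>insert b1 I. lborel))"
    by (subst lborel_eq) (simp add: nn_integral_distr shear_\<Phi> I(1)[symmetric] flip: \<Phi>_def)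
  also have "\<dots> = (\<integral>\<^sup>+f. \<integral>\<^sup>+y. h (\<Phi> (f(b1 := y + a * f b2))) \<partial>lborel \<partial>(\<Pi>\<^sub>M b\<in>I. lborel))"
    using ne by (subst product_nn_integral_insert[OF I(2,3)])
      (simp_all add: I(1)[symmetric] shear_\<Phi>[symmetric])
  also have "\<dots> = (\<integral>\<^sup>+f. h (\<Phi> f) \<partial>(\<Pi>\<^sub>M b\<in>insert b1 I. lborel))"
    by (subst product_nn_integral_insert[OF I(2,3)]) (simp_all add: fiber I(1)[symmetric])
  also have "\<dots> = (\<integral>\<^sup>+x. h x \<partial>lborel)"
    by (subst (2) lborel_eq) (simp add: nn_integral_distr I(1)[symmetric] flip: \<Phi>_def)
  finally show ?thesis .
qed

lemma distr_lborel_shear: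
  assumes "b1 \<in> Basis" "b2 \<in> Basis" "b1 \<noteq> b2"
  shows "distr lborel lborel (shear b1 b2 a) = lborel"
proof (rule measure_eqI)
  fix A assume "A \<in> sets (distr lborel lborel (shear b1 b2 a))"
  then have [measurable]: "A \<in> sets borel" by simp
  have "emeasure (distr lborel lborel (shear b1 b2 a)) A = emeasure lborel (shear b1 b2 a -` A)"
    by (simp add: emeasure_distr)
  also have "\<dots> = (\<integral>\<^sup>+x. indicator A (shear b1 b2 a x) \<partial>lborel)"
    by (subst nn_integral_indicator[symmetric])
      (auto simp: indicator_def intro!: measurable_sets_borel[of _ borel] intro: nn_integral_cong)
  also have "\<dots> = emeasure lborel A"
    using nn_integral_shear[OF assms, of "indicator A"] by simp
  finally show "emeasure (distr lborel lborel (shear b1 b2 a)) A = emeasure lborel A" .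
qed simp

text \<open>Away from the half-turn, a plane rotation is a product of three shears, the outer two
  by \<open>tan (\<theta>/2) = sin \<theta> / (1 + cos \<theta>)\<close>.\<close>

lemma plane_rot_eq_shears:
  assumes B: "b1 \<in> Basis" "b2 \<in> Basis" "b1 \<noteq> b2" and not_half_turn: "cos \<theta> \<noteq> -1"
  defines "t \<equiv> sin \<theta> / (1 + cos \<theta>)"
  shows "plane_rot b1 b2 \<theta> = shear b1 b2 t \<circ> shear b2 b1 (- sin \<theta>) \<circ> shear b1 b2 t"
proof (rule ext, rule euclidean_eqI)
  fix x and b :: 'a assume b: "b \<in> Basis"
  have c': "1 + cos \<theta> \<noteq> 0" using not_half_turn by linarith
  have t: "t * (1 + cos \<theta>) = sin \<theta>"
    using c' by (simp add: t_def)
  have "p + t * q + t * (q + - s * (p + t * q)) = c * p + s * q"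
    and "q + - s * (p + t * q) = - s * p + c * q"
    if "c\<^sup>2 + s\<^sup>2 = 1" "1 + c \<noteq> 0" "t * (1 + c) = s" for c s p q :: real
    using that by algebra+
  from this[OF sin_cos_squared_add2 c' t, where p="x \<bullet> b1" and q="x \<bullet> b2"]
  show "plane_rot b1 b2 \<theta> x \<bullet> b = (shear b1 b2 t \<circ> shear b2 b1 (- sin \<theta>) \<circ> shear b1 b2 t) x \<bullet> b"
    using B b by (auto simp: inner_plane_rot inner_shear)
qed

lemma distr_lborel_plane_rot:
  assumes B: "b1 \<in> Basis" "b2 \<in> Basis" "b1 \<noteq> b2"
  shows "distr lborel lborel (plane_rot b1 b2 \<theta>) = lborel"
proof -
  have B': "b2 \<in> Basis" "b1 \<in> Basis" "b2 \<noteq> b1" using B by auto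
  have off_half_turn: "distr lborel lborel (plane_rot b1 b2 \<alpha>) = lborel" if "cos \<alpha> \<noteq> -1" for \<alpha>
  proof -
    let ?S1 = "shear b1 b2 (sin \<alpha> / (1 + cos \<alpha>))" and ?S2 = "shear b2 b1 (- sin \<alpha>)"
    have "distr lborel lborel (plane_rot b1 b2 \<alpha>)
        = distr (distr (distr lborel lborel ?S1) lborel ?S2) lborel ?S1"
      by (simp add: distr_distr plane_rot_eq_shears[OF B that] comp_assoc)
    then show ?thesis by (simp add: distr_lborel_shear[OF B] distr_lborel_shear[OF B'])
  qed
  show ?thesis
  proof (cases "cos \<theta> = -1")
    case True
    have "cos (\<theta>/2) = 0"
      using True cos_double_cos[of "\<theta>/2"] by simp
    then have "distr (distr lborel lborel (plane_rot b1 b2 (\<theta>/2))) lborel (plane_rot b1 b2 (\<theta>/2)) = lborel"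
      by (simp add: off_half_turn)
    then show ?thesis
      by (simp add: distr_distr comp_def plane_rot_plane_rot[OF B])
  qed (rule off_half_turn)
qed

section \<open>Rotational averages of coordinates and their products\<close>

lemma plane_rot_pair_measurable [measurable]:
  "(\<lambda>p. plane_rot b1 b2 (snd p) (fst p)) \<in> borel_measurable (lborel \<Otimes>\<^sub>M lborel)"
  unfolding plane_rot_def by measurable

lemma nn_integral_plane_rot:
  assumes "b1 \<in> Basis" "b2 \<in> Basis" "b1 \<noteq> b2" and [measurable]: "f \<in> borel_measurable borel"
  shows "(\<integral>\<^sup>+x. f (plane_rot b1 b2 \<theta> x) \<partial>lborel) = (\<integral>\<^sup>+u. f u \<partial>lborel)"
  using nn_integral_distr[of "plane_rot b1 b2 \<theta>" lborel lborel f]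
  by (simp add: distr_lborel_plane_rot[OF assms(1-3)])

lemma integral_plane_rot:
  fixes f :: "'a::euclidean_space \<Rightarrow> real"
  assumes "b1 \<in> Basis" "b2 \<in> Basis" "b1 \<noteq> b2" and [measurable]: "f \<in> borel_measurable borel"
  shows "(\<integral>x. f (plane_rot b1 b2 \<theta> x) \<partial>lborel) = (\<integral>u. f u \<partial>lborel)"
  using integral_distr[of "plane_rot b1 b2 \<theta>" lborel lborel f]
  by (simp add: distr_lborel_plane_rot[OF assms(1-3)])

lemma integral_trigonometric_polynomial:
  "(LINT \<theta>:{0..2*pi}|lborel. a + cos \<theta> * b + sin \<theta> * c + cos (2*\<theta>) * d + sin (2*\<theta>) * e)
     = 2 * pi * a"
proof -
  define P where "P \<theta> = a * \<theta> + b * sin \<theta> - c * cos \<theta> + d * sin (2*\<theta>) / 2 - e * cos (2*\<theta>) / 2"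
    for \<theta>
  have "(LINT \<theta>:{0..2*pi}|lborel. a + cos \<theta> * b + sin \<theta> * c + cos (2*\<theta>) * d + sin (2*\<theta>) * e)
      = P (2*pi) - P 0"
    unfolding set_lebesgue_integral_def P_def
    by (rule integral_FTC_atLeastAtMost)
      (auto intro!: derivative_eq_intros continuous_intros
        simp: has_real_derivative_iff_has_vector_derivative[symmetric])
  also have "\<dots> = 2 * pi * a"
    using sin_npi[of 4] cos_npi[of 4] by (simp add: P_def mult.assoc)
  finally show ?thesis .
qed

lemma integral_mult_plane_rot:
  fixes \<psi> h :: "'a::euclidean_space \<Rightarrow> real"
  assumes B: "b1 \<in> Basis" "b2 \<in> Basis" "b1 \<noteq> b2"
    and [measurable]: "\<psi> \<in> borel_measurable borel" "h \<in> borel_measurable borel"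
  shows "(\<integral>x. \<psi> x * h (plane_rot b1 b2 \<theta> x) \<partial>lborel) = (\<integral>u. \<psi> (plane_rot b1 b2 (- \<theta>) u) * h u \<partial>lborel)"
  using integral_plane_rot[OF B, of "\<lambda>u. \<psi> (plane_rot b1 b2 (- \<theta>) u) * h u" \<theta>]
  by (simp add: plane_rot_inverse[OF B])

lemma nn_integral_mult_plane_rot:
  fixes \<psi> h :: "'a::euclidean_space \<Rightarrow> real"
  assumes B: "b1 \<in> Basis" "b2 \<in> Basis" "b1 \<noteq> b2"
    and [measurable]: "\<psi> \<in> borel_measurable borel" "h \<in> borel_measurable borel"
  shows "(\<integral>\<^sup>+x. ennreal \<bar>\<psi> x * h (plane_rot b1 b2 \<theta> x)\<bar> \<partial>lborel)
           = (\<integral>\<^sup>+u. ennreal \<bar>\<psi> (plane_rot b1 b2 (- \<theta>) u) * h u\<bar> \<partial>lborel)"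
  using nn_integral_plane_rot[OF B, of "\<lambda>u. ennreal \<bar>\<psi> (plane_rot b1 b2 (- \<theta>) u) * h u\<bar>" \<theta>]
  by (simp add: plane_rot_inverse[OF B])

lemma abs_trigonometric_polynomial_le:
  fixes \<theta> :: real
  shows "\<bar>a + cos \<theta> * b + sin \<theta> * c + cos (2*\<theta>) * d + sin (2*\<theta>) * e\<bar>
           \<le> \<bar>a\<bar> + \<bar>b\<bar> + \<bar>c\<bar> + \<bar>d\<bar> + \<bar>e\<bar>"
proof -
  have bounded_factor: "\<bar>t * y\<bar> \<le> \<bar>y\<bar>" if "\<bar>t\<bar> \<le> 1" for t y :: real
    using that by (simp add: abs_mult mult_left_le_one_le)
  show ?thesis
    using bounded_factor[OF abs_cos_le_one, of \<theta> b] bounded_factor[OF abs_sin_le_one, of \<theta> c]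
      bounded_factor[OF abs_cos_le_one, of "2*\<theta>" d] bounded_factor[OF abs_sin_le_one, of "2*\<theta>" e]
    by linarith
qed

lemma integrable_plane_rot_average_pair:
  fixes \<psi> h R :: "'a::euclidean_space \<Rightarrow> real"
  assumes B: "b1 \<in> Basis" "b2 \<in> Basis" "b1 \<noteq> b2"
    and [measurable]: "\<psi> \<in> borel_measurable borel" "h \<in> borel_measurable borel"
    and R: "integrable lborel R"
    and dominated: "\<And>\<theta> u. \<bar>\<psi> (plane_rot b1 b2 (- \<theta>) u) * h u\<bar> \<le> R u"
  shows "integrable (lborel \<Otimes>\<^sub>M lborel)
           (\<lambda>p. indicator {0..2*pi} (snd p) * (\<psi> (fst p) * h (plane_rot b1 b2 (snd p) (fst p))))"
proof -
  define K where "K = (\<integral>\<^sup>+u. ennreal (R u) \<partial>lborel)"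
  have "K < \<infinity>"
    using R dominated[of 0] unfolding K_def
    by (subst nn_integral_eq_integral) (auto intro: order_trans[OF abs_ge_zero])
  have fiber: "(\<integral>\<^sup>+x. ennreal \<bar>\<psi> x * h (plane_rot b1 b2 \<theta> x)\<bar> \<partial>lborel) \<le> K" for \<theta>
  proof -
    have "(\<integral>\<^sup>+x. ennreal \<bar>\<psi> x * h (plane_rot b1 b2 \<theta> x)\<bar> \<partial>lborel)
        = (\<integral>\<^sup>+u. ennreal \<bar>\<psi> (plane_rot b1 b2 (- \<theta>) u) * h u\<bar> \<partial>lborel)"
      by (rule nn_integral_mult_plane_rot[OF B]) measurable
    also have "\<dots> \<le> K"
      unfolding K_def by (intro nn_integral_mono ennreal_leI dominated)
    finally show ?thesis .
  qed
  have "(\<integral>\<^sup>+p. ennreal (norm (indicator {0..2*pi} (snd p) * (\<psi> (fst p) * h (plane_rot b1 b2 (snd p) (fst p)))))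
          \<partial>(lborel \<Otimes>\<^sub>M lborel))
      = (\<integral>\<^sup>+\<theta>. indicator {0..2*pi} \<theta> * \<integral>\<^sup>+x. ennreal \<bar>\<psi> x * h (plane_rot b1 b2 \<theta> x)\<bar> \<partial>lborel \<partial>lborel)"
    by (subst lborel_pair.nn_integral_snd[symmetric])
      (auto intro!: nn_integral_cong simp: abs_mult indicator_def)
  also have "\<dots> \<le> (\<integral>\<^sup>+\<theta>. indicator {0..2*pi} \<theta> * K \<partial>lborel)"
    by (intro nn_integral_mono mult_left_mono fiber) auto
  also have "\<dots> = K * ennreal (2*pi)"
    by (simp add: nn_integral_cmult_indicator mult.commute)
  also have "\<dots> < \<infinity>"
    using \<open>K < \<infinity>\<close> by (simp add: ennreal_mult_less_top)
  finally show ?thesis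
    by (simp add: integrable_iff_bounded)
qed

text \<open>Fubini and the invariance of Lebesgue measure under each rotation move the rotation from
  \<open>h\<close> onto \<open>\<psi>\<close>; then only the constant term of the trigonometric expansion survives.\<close>

lemma plane_rot_average:
  fixes \<psi> h A B C D E :: "'a::euclidean_space \<Rightarrow> real"
  assumes B: "b1 \<in> Basis" "b2 \<in> Basis" "b1 \<noteq> b2"
    and [measurable]: "\<psi> \<in> borel_measurable borel" "h \<in> borel_measurable borel"
      "A \<in> borel_measurable borel" "B \<in> borel_measurable borel" "C \<in> borel_measurable borel"
      "D \<in> borel_measurable borel" "E \<in> borel_measurable borel"
    and expand: "\<And>\<theta> u. \<psi> (plane_rot b1 b2 (- \<theta>) u)
                   = A u + cos \<theta> * B u + sin \<theta> * C u + cos (2*\<theta>) * D u + sin (2*\<theta>) * E u"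
    and int: "integrable lborel (\<lambda>u. A u * h u)" "integrable lborel (\<lambda>u. B u * h u)"
      "integrable lborel (\<lambda>u. C u * h u)" "integrable lborel (\<lambda>u. D u * h u)"
      "integrable lborel (\<lambda>u. E u * h u)"
  shows "integrable lborel (\<lambda>x. \<psi> x * (LINT \<theta>:{0..2*pi}|lborel. h (plane_rot b1 b2 \<theta> x)))"
    and "(LINT x|lborel. \<psi> x * (LINT \<theta>:{0..2*pi}|lborel. h (plane_rot b1 b2 \<theta> x)))
           = 2 * pi * (LINT u|lborel. A u * h u)"
proof -
  define G where "G p = indicator {0..2*pi} (snd p) * (\<psi> (fst p) * h (plane_rot b1 b2 (snd p) (fst p)))"
    for p :: "'a \<times> real"
  define R where "R u = \<bar>A u * h u\<bar> + \<bar>B u * h u\<bar> + \<bar>C u * h u\<bar> + \<bar>D u * h u\<bar> + \<bar>E u * h u\<bar>"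
    for u
  have R: "integrable lborel R"
    unfolding R_def using int by auto
  have dominated: "\<bar>\<psi> (plane_rot b1 b2 (- \<theta>) u) * h u\<bar> \<le> R u" for \<theta> u
    using abs_trigonometric_polynomial_le[of "A u * h u" \<theta> "B u * h u" "C u * h u" "D u * h u" "E u * h u"]
    by (simp add: R_def expand algebra_simps)
  have G: "integrable (lborel \<Otimes>\<^sub>M lborel) G"
    unfolding G_def by (rule integrable_plane_rot_average_pair[OF B _ _ R dominated]) measurable
  have x_section: "(\<integral>\<theta>. G (x, \<theta>) \<partial>lborel) = \<psi> x * (LINT \<theta>:{0..2*pi}|lborel. h (plane_rot b1 b2 \<theta> x))"
    for x
    by (simp add: G_def set_lebesgue_integral_def mult.left_commute[of "indicator _ _"])
  show "integrable lborel (\<lambda>x. \<psi> x * (LINT \<theta>:{0..2*pi}|lborel. h (plane_rot b1 b2 \<theta> x)))"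
    using lborel_pair.integrable_fst'[OF G] by (simp add: x_section)
  have \<theta>_section: "(\<integral>x. G (x, \<theta>) \<partial>lborel) = indicator {0..2*pi} \<theta> *
      ((LINT u|lborel. A u * h u) + cos \<theta> * (LINT u|lborel. B u * h u) + sin \<theta> * (LINT u|lborel. C u * h u)
       + cos (2*\<theta>) * (LINT u|lborel. D u * h u) + sin (2*\<theta>) * (LINT u|lborel. E u * h u))" for \<theta>
  proof -
    have "(\<integral>x. \<psi> x * h (plane_rot b1 b2 \<theta> x) \<partial>lborel)
        = (\<integral>u. \<psi> (plane_rot b1 b2 (- \<theta>) u) * h u \<partial>lborel)"
      by (rule integral_mult_plane_rot[OF B]) measurable
    also have "\<dots> = (\<integral>u. A u * h u + cos \<theta> * (B u * h u) + sin \<theta> * (C u * h u)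
        + cos (2*\<theta>) * (D u * h u) + sin (2*\<theta>) * (E u * h u) \<partial>lborel)"
      by (intro Bochner_Integration.integral_cong) (simp_all add: expand algebra_simps)
    also have "\<dots> = (LINT u|lborel. A u * h u) + cos \<theta> * (LINT u|lborel. B u * h u)
        + sin \<theta> * (LINT u|lborel. C u * h u) + cos (2*\<theta>) * (LINT u|lborel. D u * h u)
        + sin (2*\<theta>) * (LINT u|lborel. E u * h u)"
      using int by simp
    finally show ?thesis
      by (simp add: G_def)
  qed
  have "(LINT x|lborel. \<psi> x * (LINT \<theta>:{0..2*pi}|lborel. h (plane_rot b1 b2 \<theta> x)))
      = (\<integral>\<theta>. \<integral>x. G (x, \<theta>) \<partial>lborel \<partial>lborel)"
    using lborel_pair.integral_fst'[OF G] lborel_pair.integral_snd[of "\<lambda>x \<theta>. G (x, \<theta>)"] G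
    by (simp add: x_section)
  also have "\<dots> = 2 * pi * (LINT u|lborel. A u * h u)"
    unfolding \<theta>_section
    using integral_trigonometric_polynomial[of "LINT u|lborel. A u * h u" "LINT u|lborel. B u * h u"
        "LINT u|lborel. C u * h u" "LINT u|lborel. D u * h u" "LINT u|lborel. E u * h u"]
    by (simp add: set_lebesgue_integral_def)
  finally show "(LINT x|lborel. \<psi> x * (LINT \<theta>:{0..2*pi}|lborel. h (plane_rot b1 b2 \<theta> x)))
      = 2 * pi * (LINT u|lborel. A u * h u)" .
qed

lemma integrable_mult_dominated:
  fixes f g w :: "'a \<Rightarrow> real"
  assumes [measurable]: "f \<in> borel_measurable M" "g \<in> borel_measurable M"
    and "integrable M (\<lambda>x. w x * g x)" and bound: "\<And>x. \<bar>f x\<bar> \<le> K * w x"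
  shows "integrable M (\<lambda>x. f x * g x)"
proof (rule Bochner_Integration.integrable_bound)
  show "integrable M (\<lambda>x. K * (w x * g x))"
    using assms(3) by simp
  show "AE x in M. norm (f x * g x) \<le> norm (K * (w x * g x))"
  proof (rule AE_I2)
    fix x
    have "\<bar>f x\<bar> * \<bar>g x\<bar> \<le> \<bar>K * w x\<bar> * \<bar>g x\<bar>"
      using bound[of x] by (intro mult_right_mono) auto
    also have "\<dots> = \<bar>K * (w x * g x)\<bar>"
      by (simp add: abs_mult)
    finally show "norm (f x * g x) \<le> norm (K * (w x * g x))"
      by (simp add: abs_mult)
  qed
qed simp

lemma borel_measurable_of_weighted:
  fixes f w :: "'a \<Rightarrow> real"
  assumes "(\<lambda>x. w x * f x) \<in> borel_measurable M" "w \<in> borel_measurable M" "\<And>x. w x \<noteq> 0"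
  shows "f \<in> borel_measurable M"
proof -
  have "(\<lambda>x. (w x * f x) / w x) \<in> borel_measurable M"
    using assms(1,2) by measurable
  then show ?thesis
    using assms(3) by simp
qed

lemma integrable_mult_weighted:
  fixes f \<phi> w :: "'a::euclidean_space \<Rightarrow> real"
  assumes [measurable]: "w \<in> borel_measurable borel" "\<phi> \<in> borel_measurable borel"
    and "\<And>v. \<bar>\<phi> v\<bar> \<le> w v" "\<And>v. 0 < w v" and f: "integrable lborel (\<lambda>v. w v * f v)"
  shows "integrable lborel (\<lambda>v. \<phi> v * f v)"
proof (rule integrable_mult_dominated[OF _ _ f, where K=1])
  show "f \<in> borel_measurable lborel"
    using assms(4) by (intro borel_measurable_of_weighted[OF borel_measurable_integrable[OF f]])
      (simp_all add: less_imp_neq[symmetric])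
qed (use assms(3) in simp_all)

lemma le_one_plus_square: "(t::real) \<le> 1 + t\<^sup>2"
proof -
  have "0 \<le> (t - 1/2)\<^sup>2" by simp
  then show ?thesis by (simp add: power2_eq_square algebra_simps)
qed

lemma abs_mult_le_of_norm_bounds:
  fixes x y :: real
  assumes "\<bar>x\<bar> \<le> n" "\<bar>y\<bar> \<le> n"
  shows "\<bar>x * y\<bar> \<le> n\<^sup>2"
  using mult_mono[OF assms order_trans[OF abs_ge_zero assms(1)] abs_ge_zero]
  by (simp add: abs_mult power2_eq_square)

lemma plane_rot_average_linear:
  fixes \<psi> h A B C :: "'a::euclidean_space \<Rightarrow> real"
  assumes B: "b1 \<in> Basis" "b2 \<in> Basis" "b1 \<noteq> b2"
    and [measurable]: "\<psi> \<in> borel_measurable borel" "h \<in> borel_measurable borel"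
      "A \<in> borel_measurable borel" "B \<in> borel_measurable borel" "C \<in> borel_measurable borel"
    and expand: "\<And>\<theta> u. \<psi> (plane_rot b1 b2 (- \<theta>) u) = A u + cos \<theta> * B u + sin \<theta> * C u"
    and bounds: "\<And>u. \<bar>A u\<bar> \<le> norm u" "\<And>u. \<bar>B u\<bar> \<le> norm u" "\<And>u. \<bar>C u\<bar> \<le> norm u"
    and h: "integrable lborel (\<lambda>u. (1 + (norm u)\<^sup>2) * h u)"
  shows "integrable lborel (\<lambda>x. \<psi> x * (LINT \<theta>:{0..2*pi}|lborel. h (plane_rot b1 b2 \<theta> x)))"
    and "(LINT x|lborel. \<psi> x * (LINT \<theta>:{0..2*pi}|lborel. h (plane_rot b1 b2 \<theta> x)))
           = 2 * pi * (LINT u|lborel. A u * h u)"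
proof -
  have int: "integrable lborel (\<lambda>u. X u * h u)"
    if [measurable]: "X \<in> borel_measurable borel" and "\<And>u. \<bar>X u\<bar> \<le> norm u" for X
    by (rule integrable_mult_dominated[OF _ _ h, where K=1])
      (use that(2) in \<open>auto intro: order_trans[OF _ le_one_plus_square]\<close>)
  note average = plane_rot_average[OF B, where D="\<lambda>_. 0" and E="\<lambda>_. 0"]
  show "integrable lborel (\<lambda>x. \<psi> x * (LINT \<theta>:{0..2*pi}|lborel. h (plane_rot b1 b2 \<theta> x)))"
    by (rule average(1)) (auto simp: expand intro!: int bounds)
  show "(LINT x|lborel. \<psi> x * (LINT \<theta>:{0..2*pi}|lborel. h (plane_rot b1 b2 \<theta> x)))
      = 2 * pi * (LINT u|lborel. A u * h u)"
    by (rule average(2)) (auto simp: expand intro!: int bounds)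
qed

lemma product_of_trigonometric_linear:
  fixes \<theta> :: real
  shows "(p1 + cos \<theta> * q1 + sin \<theta> * r1) * (p2 + cos \<theta> * q2 + sin \<theta> * r2) =
     (p1 * p2 + (q1 * q2 + r1 * r2) / 2) + cos \<theta> * (p1 * q2 + q1 * p2) + sin \<theta> * (p1 * r2 + r1 * p2)
     + cos (2*\<theta>) * ((q1 * q2 - r1 * r2) / 2) + sin (2*\<theta>) * ((q1 * r2 + r1 * q2) / 2)"
proof -
  from sin_cos_squared_add2[of \<theta>] show ?thesis
    unfolding cos_double sin_double by algebra
qed

lemma plane_rot_average_quadratic:
  fixes \<psi> \<phi> h A B C A' B' C' :: "'a::euclidean_space \<Rightarrow> real"
  assumes B: "b1 \<in> Basis" "b2 \<in> Basis" "b1 \<noteq> b2"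
    and [measurable]: "\<psi> \<in> borel_measurable borel" "\<phi> \<in> borel_measurable borel"
      "h \<in> borel_measurable borel"
      "A \<in> borel_measurable borel" "B \<in> borel_measurable borel" "C \<in> borel_measurable borel"
      "A' \<in> borel_measurable borel" "B' \<in> borel_measurable borel" "C' \<in> borel_measurable borel"
    and expand: "\<And>\<theta> u. \<psi> (plane_rot b1 b2 (- \<theta>) u) = A u + cos \<theta> * B u + sin \<theta> * C u"
      "\<And>\<theta> u. \<phi> (plane_rot b1 b2 (- \<theta>) u) = A' u + cos \<theta> * B' u + sin \<theta> * C' u"
    and bounds: "\<And>X u. X \<in> {A, B, C, A', B', C'} \<Longrightarrow> \<bar>X u\<bar> \<le> norm u"
    and h: "integrable lborel (\<lambda>u. (1 + (norm u)\<^sup>2) * h u)"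
  shows "integrable lborel (\<lambda>x. \<psi> x * \<phi> x * (LINT \<theta>:{0..2*pi}|lborel. h (plane_rot b1 b2 \<theta> x)))"
    and "(LINT x|lborel. \<psi> x * \<phi> x * (LINT \<theta>:{0..2*pi}|lborel. h (plane_rot b1 b2 \<theta> x)))
           = 2 * pi * (LINT u|lborel. (A u * A' u + (B u * B' u + C u * C' u) / 2) * h u)"
proof -
  have pair: "\<bar>X u * Y u\<bar> \<le> 1 + (norm u)\<^sup>2" if "X \<in> {A, B, C, A', B', C'}" "Y \<in> {A, B, C, A', B', C'}"
    for X Y u
    using abs_mult_le_of_norm_bounds[OF bounds[OF that(1)] bounds[OF that(2)], of u] by simp
  have product: "integrable lborel (\<lambda>u. X u * Y u * h u)"
    if "X \<in> {A, B, C, A', B', C'}" "Y \<in> {A, B, C, A', B', C'}" for X Y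
  proof (rule integrable_mult_dominated[OF _ _ h, where K=1])
    show "(\<lambda>u. X u * Y u) \<in> borel_measurable lborel"
      using that by auto
  qed (use pair[OF that] in auto)
  have expand2: "\<psi> (plane_rot b1 b2 (- \<theta>) u) * \<phi> (plane_rot b1 b2 (- \<theta>) u) =
    (A u * A' u + (B u * B' u + C u * C' u) / 2) + cos \<theta> * (A u * B' u + B u * A' u)
    + sin \<theta> * (A u * C' u + C u * A' u) + cos (2*\<theta>) * ((B u * B' u - C u * C' u) / 2)
    + sin (2*\<theta>) * ((B u * C' u + C u * B' u) / 2)" for \<theta> u
    unfolding expand by (rule product_of_trigonometric_linear)
  note average = plane_rot_average[OF B, where \<psi>="\<lambda>u. \<psi> u * \<phi> u", OF _ _ _ _ _ _ _ expand2]
  have ints: "integrable lborel (\<lambda>u. (A u * A' u + (B u * B' u + C u * C' u) / 2) * h u)"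
    "integrable lborel (\<lambda>u. (A u * B' u + B u * A' u) * h u)"
    "integrable lborel (\<lambda>u. (A u * C' u + C u * A' u) * h u)"
    "integrable lborel (\<lambda>u. ((B u * B' u - C u * C' u) / 2) * h u)"
    "integrable lborel (\<lambda>u. ((B u * C' u + C u * B' u) / 2) * h u)"
    using product by (auto simp: algebra_simps simp del: times_divide_eq_left)
  show "integrable lborel (\<lambda>x. \<psi> x * \<phi> x * (LINT \<theta>:{0..2*pi}|lborel. h (plane_rot b1 b2 \<theta> x)))"
    by (rule average(1)[OF _ _ _ _ _ _ _ ints]) measurable
  show "(LINT x|lborel. \<psi> x * \<phi> x * (LINT \<theta>:{0..2*pi}|lborel. h (plane_rot b1 b2 \<theta> x)))
      = 2 * pi * (LINT u|lborel. (A u * A' u + (B u * B' u + C u * C' u) / 2) * h u)"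
    by (rule average(2)[OF _ _ _ _ _ _ _ ints]) measurable
qed

lemma inner_plane_rot_neg:
  assumes "b1 \<in> Basis" "b2 \<in> Basis" "b1 \<noteq> b2" "b \<in> Basis"
  shows "plane_rot b1 b2 (- \<theta>) u \<bullet> b =
           (if b = b1 \<or> b = b2 then 0 else u \<bullet> b)
         + cos \<theta> * (if b = b1 \<or> b = b2 then u \<bullet> b else 0)
         + sin \<theta> * (if b = b1 then - (u \<bullet> b2) else if b = b2 then u \<bullet> b1 else 0)"
  using assms by (auto simp: inner_plane_rot)

lemma plane_rot_average_inner:
  fixes h :: "'a::euclidean_space \<Rightarrow> real"
  assumes B: "b1 \<in> Basis" "b2 \<in> Basis" "b1 \<noteq> b2" and b: "b \<in> Basis"
    and [measurable]: "h \<in> borel_measurable borel"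
    and h: "integrable lborel (\<lambda>u. (1 + (norm u)\<^sup>2) * h u)"
  shows "integrable lborel (\<lambda>x. (x \<bullet> b) * (LINT \<theta>:{0..2*pi}|lborel. h (plane_rot b1 b2 \<theta> x)))"
    and "(LINT x|lborel. (x \<bullet> b) * (LINT \<theta>:{0..2*pi}|lborel. h (plane_rot b1 b2 \<theta> x)))
           = 2 * pi * (if b = b1 \<or> b = b2 then 0 else LINT u|lborel. (u \<bullet> b) * h u)"
proof -
  note average = plane_rot_average_linear[OF B, where \<psi>="\<lambda>x. x \<bullet> b", OF _ _ _ _ _ inner_plane_rot_neg[OF B b]]
  have bounds: "\<bar>if P then 0 else u \<bullet> b\<bar> \<le> norm u" "\<bar>if Q then u \<bullet> b else 0\<bar> \<le> norm u"
    "\<bar>if b = b1 then - (u \<bullet> b2) else if b = b2 then u \<bullet> b1 else 0\<bar> \<le> norm u" for P Q u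
    using B b by (auto simp: Basis_le_norm)
  show "integrable lborel (\<lambda>x. (x \<bullet> b) * (LINT \<theta>:{0..2*pi}|lborel. h (plane_rot b1 b2 \<theta> x)))"
    by (rule average(1)[OF _ _ _ _ _ bounds h]) measurable
  show "(LINT x|lborel. (x \<bullet> b) * (LINT \<theta>:{0..2*pi}|lborel. h (plane_rot b1 b2 \<theta> x)))
      = 2 * pi * (if b = b1 \<or> b = b2 then 0 else LINT u|lborel. (u \<bullet> b) * h u)"
    by (subst average(2)[OF _ _ _ _ _ bounds h]) (simp_all, measurable)
qed

lemma plane_rot_average_inner_mult:
  fixes h :: "'a::euclidean_space \<Rightarrow> real"
  assumes B: "b1 \<in> Basis" "b2 \<in> Basis" "b1 \<noteq> b2"
    and b: "b \<in> Basis" "b' \<in> Basis" "b \<noteq> b'"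
    and [measurable]: "h \<in> borel_measurable borel"
    and h: "integrable lborel (\<lambda>u. (1 + (norm u)\<^sup>2) * h u)"
  shows "integrable lborel (\<lambda>x. (x \<bullet> b) * (x \<bullet> b') * (LINT \<theta>:{0..2*pi}|lborel. h (plane_rot b1 b2 \<theta> x)))"
    and "(LINT x|lborel. (x \<bullet> b) * (x \<bullet> b') * (LINT \<theta>:{0..2*pi}|lborel. h (plane_rot b1 b2 \<theta> x)))
           = 2 * pi * (if b \<in> {b1, b2} \<or> b' \<in> {b1, b2} then 0 else LINT u|lborel. (u \<bullet> b) * (u \<bullet> b') * h u)"
proof -
  note average = plane_rot_average_quadratic[OF B, where \<psi>="\<lambda>x. x \<bullet> b" and \<phi>="\<lambda>x. x \<bullet> b'",
      OF _ _ _ _ _ _ _ _ _ inner_plane_rot_neg[OF B b(1)] inner_plane_rot_neg[OF B b(2)] _ h]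
  have bounds: "\<bar>if P then 0 else u \<bullet> c\<bar> \<le> norm u" "\<bar>if Q then u \<bullet> c else 0\<bar> \<le> norm u"
    "\<bar>if c = b1 then - (u \<bullet> b2) else if c = b2 then u \<bullet> b1 else 0\<bar> \<le> norm u"
    if "c \<in> Basis" for P Q u c
    using B that by (auto simp: Basis_le_norm)
  have combination: "(if b = b1 \<or> b = b2 then 0 else u \<bullet> b) * (if b' = b1 \<or> b' = b2 then 0 else u \<bullet> b')
      + ((if b = b1 \<or> b = b2 then u \<bullet> b else 0) * (if b' = b1 \<or> b' = b2 then u \<bullet> b' else 0)
         + (if b = b1 then - (u \<bullet> b2) else if b = b2 then u \<bullet> b1 else 0)
           * (if b' = b1 then - (u \<bullet> b2) else if b' = b2 then u \<bullet> b1 else 0)) / 2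
      = (if b \<in> {b1, b2} \<or> b' \<in> {b1, b2} then 0 else (u \<bullet> b) * (u \<bullet> b'))" for u
    using B b by auto
  show "integrable lborel (\<lambda>x. (x \<bullet> b) * (x \<bullet> b') * (LINT \<theta>:{0..2*pi}|lborel. h (plane_rot b1 b2 \<theta> x)))"
    by (rule average(1)) (use bounds b in auto)
  show "(LINT x|lborel. (x \<bullet> b) * (x \<bullet> b') * (LINT \<theta>:{0..2*pi}|lborel. h (plane_rot b1 b2 \<theta> x)))
      = 2 * pi * (if b \<in> {b1, b2} \<or> b' \<in> {b1, b2} then 0 else LINT u|lborel. (u \<bullet> b) * (u \<bullet> b') * h u)"
    by (subst average(2)) (use bounds b in \<open>auto simp: combination\<close>)
qed

section \<open>Moments of the collision and thermostat operators\<close>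

lemma vec_nth_eq_inner_axis: "v $ k = v \<bullet> axis k (1::real)"
  by (simp add: cart_eq_inner_axis)

lemma rot_ij_eq_plane_rot:
  "i \<noteq> j \<Longrightarrow> rot_ij v i j \<theta> = plane_rot (axis i 1) (axis j 1) \<theta> v"
  unfolding rot_ij_def upd2_def plane_rot_def vec_eq_iff
  by (simp add: inner_axis) (simp add: axis_def algebra_simps)

definition pairs_avoiding :: "'n::linorder set \<Rightarrow> ('n \<times> 'n) set" where
  "pairs_avoiding S = {(i, j). i < j \<and> i \<notin> S \<and> j \<notin> S}"

lemma card_pairs_avoiding_le: "card (pairs_avoiding (S :: 'n::{finite,linorder} set)) \<le> CARD('n) choose 2"
proof -
  have "inj_on (\<lambda>(i, j). {i, j}) (pairs_avoiding S)"
    by (auto simp: inj_on_def pairs_avoiding_def doubleton_eq_iff)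
  moreover have "(\<lambda>(i, j). {i, j}) ` pairs_avoiding S \<subseteq> {T. T \<subseteq> (UNIV :: 'n set) \<and> card T = 2}"
    by (auto simp: pairs_avoiding_def)
  ultimately have "card (pairs_avoiding S) \<le> card {T. T \<subseteq> (UNIV :: 'n set) \<and> card T = 2}"
    by (intro card_inj_on_le) auto
  then show ?thesis
    using n_subsets[of "UNIV :: 'n set" 2] by simp
qed

lemma abs_component_le_weight: "\<bar>(v::real^'n) $ k\<bar> \<le> 1 + (norm v)\<^sup>2"
  using component_le_norm_cart[of v k] le_one_plus_square[of "norm v"] by linarith

lemma abs_component_mult_le_weight: "\<bar>(v::real^'n) $ k * v $ l\<bar> \<le> 1 + (norm v)\<^sup>2"
  using abs_mult_le_of_norm_bounds[OF component_le_norm_cart component_le_norm_cart, of v k l] by simp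

lemma integral_mult_kacQ:
  fixes F \<phi> :: "real^'n::{finite,linorder} \<Rightarrow> real"
  assumes int: "\<And>i j. i < j \<Longrightarrow>
      integrable lborel (\<lambda>v. \<phi> v * (LINT \<theta>:{0..2*pi}|lborel. F (rot_ij v i j \<theta>)))"
    and eq: "\<And>i j. i < j \<Longrightarrow>
      (LINT v|lborel. \<phi> v * (LINT \<theta>:{0..2*pi}|lborel. F (rot_ij v i j \<theta>)))
        = 2 * pi * (if i \<in> S \<or> j \<in> S then 0 else M)"
  shows "integrable lborel (\<lambda>v. \<phi> v * kacQ F v)"
    and "(LINT v|lborel. \<phi> v * kacQ F v) = card (pairs_avoiding S) / (CARD('n) choose 2) * M"
proof -
  define c where "c = 1 / real (CARD('n) choose 2) * (1 / (2*pi))"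
  let ?avg = "\<lambda>v i j. LINT \<theta>:{0..2*pi}|lborel. F (rot_ij v i j \<theta>)"
  have kacQ: "\<phi> v * kacQ F v = (\<Sum>(i, j)\<in>{(i, j). i < j}. c * (\<phi> v * ?avg v i j))" for v
    by (simp add: kacQ_def c_def sum_distrib_left case_prod_beta mult_ac)
  show "integrable lborel (\<lambda>v. \<phi> v * kacQ F v)"
    unfolding kacQ using int by (auto intro!: Bochner_Integration.integrable_sum)
  have "(LINT v|lborel. \<phi> v * kacQ F v)
      = (\<Sum>(i, j)\<in>{(i, j). i < j}. c * (2 * pi * (if i \<in> S \<or> j \<in> S then 0 else M)))"
    unfolding kacQ using int eq
    by (subst Bochner_Integration.integral_sum) (auto intro!: sum.cong)
  also have "\<dots> = (\<Sum>p\<in>{(i, j). i < j}. if p \<in> pairs_avoiding S then c * (2 * pi * M) else 0)"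
    by (intro sum.cong) (auto simp: pairs_avoiding_def)
  also have "\<dots> = card (pairs_avoiding S) * (c * (2 * pi * M))"
    by (simp add: sum.If_cases Int_absorb1 pairs_avoiding_def subset_eq)
  finally show "(LINT v|lborel. \<phi> v * kacQ F v) = card (pairs_avoiding S) / (CARD('n) choose 2) * M"
    by (simp add: c_def)
qed

definition moment_decay_rate :: "real \<Rightarrow> real \<Rightarrow> 'n::{finite,linorder} set \<Rightarrow> real" where
  "moment_decay_rate lam \<mu> S =
     lam * real CARD('n) * (1 - real (card (pairs_avoiding S)) / real (CARD('n) choose 2))
     + \<mu> * real (card S)"

lemma moment_decay_rate_ge:
  fixes S :: "'n::{finite,linorder} set"
  assumes "lam \<ge> 0" "\<mu> \<ge> 0" "S \<noteq> {}"
  shows "\<mu> \<le> moment_decay_rate lam \<mu> S"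
proof -
  have "card (pairs_avoiding S) / (CARD('n) choose 2) \<le> 1"
    using card_pairs_avoiding_le[of S] by (cases "CARD('n) choose 2 = 0") (simp_all add: divide_le_eq_1)
  then have "0 \<le> lam * real CARD('n) * (1 - real (card (pairs_avoiding S)) / real (CARD('n) choose 2))"
    using assms(1) by simp
  moreover have "\<mu> * 1 \<le> \<mu> * real (card S)"
    using assms(2,3) by (intro mult_left_mono) (simp_all add: Suc_le_eq card_gt_0_iff)
  ultimately show ?thesis
    unfolding moment_decay_rate_def by linarith
qed

lemma integral_mult_kac_gen:
  fixes F \<phi> :: "real^'n::{finite,linorder} \<Rightarrow> real"
  defines "M \<equiv> LINT v|lborel. \<phi> v * F v"
  assumes "integrable lborel (\<lambda>v. \<phi> v * F v)"
    and "integrable lborel (\<lambda>v. \<phi> v * kacQ F v)"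
    and "(LINT v|lborel. \<phi> v * kacQ F v) = card (pairs_avoiding S) / (CARD('n) choose 2) * M"
    and "\<And>j. integrable lborel (\<lambda>v. \<phi> v * thermoR g j F v)"
    and "\<And>j. (LINT v|lborel. \<phi> v * thermoR g j F v) = (if j \<in> S then 0 else M)"
  shows "(LINT v|lborel. \<phi> v * kac_gen lam \<mu> g F v) = - moment_decay_rate lam \<mu> S * M"
proof -
  have "(LINT v|lborel. \<phi> v * kac_gen lam \<mu> g F v)
      = (LINT v|lborel. - (lam * real CARD('n)) * (\<phi> v * F v - \<phi> v * kacQ F v)
           - \<mu> * (\<Sum>j\<in>UNIV. \<phi> v * F v - \<phi> v * thermoR g j F v))"
    by (simp add: kac_gen_def algebra_simps sum_distrib_left sum_subtractf)
  also have "\<dots> = - (lam * real CARD('n)) * (M - card (pairs_avoiding S) / (CARD('n) choose 2) * M)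
           - \<mu> * (\<Sum>j\<in>UNIV. M - (if j \<in> S then 0 else M))"
    using assms(2-) by (simp add: M_def Bochner_Integration.integrable_sum)
  also have "(\<Sum>j\<in>UNIV. M - (if j \<in> S then 0 else M)) = card S * M"
    by (simp add: if_distrib[of "\<lambda>x. M - x"] sum.If_cases)
  finally show ?thesis
    by (simp add: moment_decay_rate_def algebra_simps)
qed

locale weighted_density =
  fixes F :: "real^'n::{finite,linorder} \<Rightarrow> real"
  assumes integrable_weighted: "integrable lborel (\<lambda>v. (1 + (norm v)\<^sup>2) * F v)"
begin

lemma F_measurable [measurable]: "F \<in> borel_measurable borel"
  by (rule borel_measurable_of_weighted[where w="\<lambda>v. 1 + (norm v)\<^sup>2"])
    (use integrable_weighted in \<open>auto simp: add_pos_nonneg[THEN less_imp_neq, symmetric]\<close>)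

lemma integrable_coordinate: "integrable lborel (\<lambda>v. v $ k * F v)"
  by (rule integrable_mult_weighted[OF _ _ abs_component_le_weight _ integrable_weighted])
    (simp_all add: add_pos_nonneg)

lemma integrable_coordinate_mult: "integrable lborel (\<lambda>v. v $ k * v $ l * F v)"
  by (rule integrable_mult_weighted[OF _ _ abs_component_mult_le_weight _ integrable_weighted])
    (simp_all add: add_pos_nonneg)

lemma rot_ij_average_coordinate:
  assumes "i \<noteq> j"
  shows "integrable lborel (\<lambda>v. v $ k * (LINT \<theta>:{0..2*pi}|lborel. F (rot_ij v i j \<theta>)))"
    and "(LINT v|lborel. v $ k * (LINT \<theta>:{0..2*pi}|lborel. F (rot_ij v i j \<theta>)))
           = 2 * pi * (if k = i \<or> k = j then 0 else LINT v|lborel. v $ k * F v)"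
  using plane_rot_average_inner[of "axis i 1" "axis j 1" "axis k 1", OF _ _ _ _ F_measurable integrable_weighted]
    assms
  by (simp_all add: rot_ij_eq_plane_rot axis_eq_axis flip: vec_nth_eq_inner_axis)

lemma rot_ij_average_coordinate_mult:
  assumes "i \<noteq> j" "k \<noteq> l"
  shows "integrable lborel (\<lambda>v. v $ k * v $ l * (LINT \<theta>:{0..2*pi}|lborel. F (rot_ij v i j \<theta>)))"
    and "(LINT v|lborel. v $ k * v $ l * (LINT \<theta>:{0..2*pi}|lborel. F (rot_ij v i j \<theta>)))
           = 2 * pi * (if k \<in> {i, j} \<or> l \<in> {i, j} then 0 else LINT v|lborel. v $ k * v $ l * F v)"
  using plane_rot_average_inner_mult[of "axis i 1" "axis j 1" "axis k 1" "axis l 1",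
      OF _ _ _ _ _ _ F_measurable integrable_weighted] assms
  by (simp_all add: rot_ij_eq_plane_rot axis_eq_axis flip: vec_nth_eq_inner_axis)

lemma kacQ_coordinate:
  shows "integrable lborel (\<lambda>v. v $ k * kacQ F v)"
    and "(LINT v|lborel. v $ k * kacQ F v)
           = card (pairs_avoiding {k}) / (CARD('n) choose 2) * (LINT v|lborel. v $ k * F v)"
proof -
  have "i < j \<Longrightarrow> (LINT v|lborel. v $ k * (LINT \<theta>:{0..2*pi}|lborel. F (rot_ij v i j \<theta>)))
          = 2 * pi * (if i \<in> {k} \<or> j \<in> {k} then 0 else LINT v|lborel. v $ k * F v)" for i j
    using rot_ij_average_coordinate(2)[of i j k] by auto
  from integral_mult_kacQ[OF rot_ij_average_coordinate(1) this]
  show "integrable lborel (\<lambda>v. v $ k * kacQ F v)"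
    and "(LINT v|lborel. v $ k * kacQ F v)
           = card (pairs_avoiding {k}) / (CARD('n) choose 2) * (LINT v|lborel. v $ k * F v)"
    by auto
qed

lemma kacQ_coordinate_mult:
  assumes "k \<noteq> l"
  shows "integrable lborel (\<lambda>v. v $ k * v $ l * kacQ F v)"
    and "(LINT v|lborel. v $ k * v $ l * kacQ F v)
           = card (pairs_avoiding {k, l}) / (CARD('n) choose 2) * (LINT v|lborel. v $ k * v $ l * F v)"
proof -
  have "i < j \<Longrightarrow> (LINT v|lborel. v $ k * v $ l * (LINT \<theta>:{0..2*pi}|lborel. F (rot_ij v i j \<theta>)))
          = 2 * pi * (if i \<in> {k, l} \<or> j \<in> {k, l} then 0 else LINT v|lborel. v $ k * v $ l * F v)"
    for i j
    using rot_ij_average_coordinate_mult(2)[OF _ assms, of i j] by auto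
  from integral_mult_kacQ[OF rot_ij_average_coordinate_mult(1)[OF _ assms] this]
  show "integrable lborel (\<lambda>v. v $ k * v $ l * kacQ F v)"
    and "(LINT v|lborel. v $ k * v $ l * kacQ F v)
           = card (pairs_avoiding {k, l}) / (CARD('n) choose 2) * (LINT v|lborel. v $ k * v $ l * F v)"
    by auto
qed

end

lemma lborel_pair_integral_fst:
  fixes f :: "'a::euclidean_space \<times> 'b::euclidean_space \<Rightarrow> real"
  assumes "integrable lborel f"
  shows "integrable lborel (\<lambda>x. \<integral>y. f (x, y) \<partial>lborel)"
    and "(\<integral>x. \<integral>y. f (x, y) \<partial>lborel \<partial>lborel) = integral\<^sup>L lborel f"
  using lborel_pair.integrable_fst'[of f] lborel_pair.integral_fst'[of f] assms
  by (simp_all add: lborel_prod)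

lemma lborel_integral_product:
  fixes f :: "'a::euclidean_space \<Rightarrow> real" and g :: "'b::euclidean_space \<Rightarrow> real"
  assumes f: "integrable lborel f" and g: "integrable lborel g"
  shows "integrable lborel (\<lambda>p::'a \<times> 'b. f (fst p) * g (snd p))"
    and "(LINT p|lborel. f (fst p) * g (snd p)) = (LINT x|lborel. f x) * (LINT y|lborel. g y)"
proof -
  have [measurable]: "f \<in> borel_measurable borel" "g \<in> borel_measurable borel"
    using f g by auto
  have "(\<integral>\<^sup>+p. ennreal (norm (f (fst p) * g (snd p))) \<partial>(lborel \<Otimes>\<^sub>M lborel))
      = (\<integral>\<^sup>+x. ennreal (norm (f x)) \<partial>lborel) * (\<integral>\<^sup>+y. ennreal (norm (g y)) \<partial>lborel)"
    by (subst lborel.nn_integral_fst[symmetric])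
      (auto simp: abs_mult ennreal_mult nn_integral_cmult nn_integral_multc simp del: norm_mult)
  also have "\<dots> < \<infinity>"
    using f g by (simp add: integrable_iff_bounded ennreal_mult_less_top)
  finally have "integrable (lborel \<Otimes>\<^sub>M lborel) (\<lambda>p::'a \<times> 'b. f (fst p) * g (snd p))"
    by (simp add: integrable_iff_bounded)
  then show int: "integrable lborel (\<lambda>p::'a \<times> 'b. f (fst p) * g (snd p))"
    by (simp add: lborel_prod)
  show "(LINT p|lborel. f (fst p) * g (snd p)) = (LINT x|lborel. f x) * (LINT y|lborel. g y)"
    using lborel_pair_integral_fst(2)[OF int] by simp
qed

text \<open>\<open>R\<^sub>j[F]\<close> is the rotation average over the \<open>(v\<^sub>j, w)\<close>-plane of the density \<open>F \<otimes> g\<close>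
  on \<open>\<real>\<^sup>N \<times> \<real>\<close>, integrated over \<open>w\<close>.\<close>

lemma plane_rot_thermostat:
  "plane_rot (axis j 1, 0) (0, 1) \<theta> (v, w) = (thermo_j v j w \<theta>, w * cos \<theta> - v $ j * sin \<theta>)"
  unfolding plane_rot_def thermo_j_def upd1_def
  by (simp add: inner_axis vec_eq_iff) (simp add: axis_def algebra_simps)

locale thermostatted_density = weighted_density F for F :: "real^'n::{finite,linorder} \<Rightarrow> real" +
  fixes g :: "real \<Rightarrow> real"
  assumes thermostat: "thermostat_density g"
begin

definition joint :: "(real^'n::{finite,linorder}) \<times> real \<Rightarrow> real" where
  "joint p = F (fst p) * g (snd p)"

lemma g_integrable: "integrable lborel g"
  using thermostat by (simp add: thermostat_density_def)

lemma joint_measurable [measurable]: "joint \<in> borel_measurable borel"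
proof -
  have [measurable]: "g \<in> borel_measurable borel"
    using g_integrable by auto
  have "(\<lambda>p. F (fst p) * g (snd p)) \<in> borel_measurable (borel \<Otimes>\<^sub>M borel)"
    by measurable
  then show ?thesis
    by (simp add: joint_def[abs_def] borel_prod)
qed

lemma integrable_joint_weighted: "integrable lborel (\<lambda>p. (1 + (norm p)\<^sup>2) * joint p)"
proof (rule integrable_mult_dominated[where K=1])
  have "integrable lborel (\<lambda>w. (1 + w\<^sup>2) * g w)"
    using thermostat by (simp add: thermostat_density_def distrib_right)
  from lborel_integral_product(1)[OF integrable_weighted this]
  show "integrable lborel (\<lambda>p. ((1 + (norm (fst p))\<^sup>2) * (1 + (snd p)\<^sup>2)) * joint p)"
    by (simp add: joint_def mult_ac)
  show "\<bar>1 + (norm p)\<^sup>2\<bar> \<le> 1 * ((1 + (norm (fst p))\<^sup>2) * (1 + (snd p)\<^sup>2))" for p :: "(real^'n::{finite,linorder}) \<times> real"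
    by (cases p) (simp add: norm_Pair algebra_simps)
qed measurable

lemma thermoR_eq_plane_rot_average:
  "thermoR g j F v = (LINT w|lborel.
     (1 / (2*pi)) * (LINT \<theta>:{0..2*pi}|lborel. joint (plane_rot (axis j 1, 0) (0, 1) \<theta> (v, w))))"
  by (simp add: thermoR_def plane_rot_thermostat joint_def mult.commute)

lemma thermoR_moment:
  fixes j
  defines "L \<equiv> \<lambda>p. LINT \<theta>:{0..2*pi}|lborel. joint (plane_rot (axis j 1, 0) (0, 1) \<theta> p)"
  assumes int: "integrable lborel (\<lambda>p. \<phi> (fst p) * L p)"
    and eq: "(LINT p|lborel. \<phi> (fst p) * L p) = 2 * pi * (LINT p|lborel. a (fst p) * joint p)"
    and a: "integrable lborel (\<lambda>v. a v * F v)"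
  shows "integrable lborel (\<lambda>v. \<phi> v * thermoR g j F v)"
    and "(LINT v|lborel. \<phi> v * thermoR g j F v) = (LINT v|lborel. a v * F v)"
proof -
  have fiber: "\<phi> v * thermoR g j F v = (1 / (2*pi)) * (\<integral>w. \<phi> (fst (v, w)) * L (v, w) \<partial>lborel)" for v
    by (simp add: thermoR_eq_plane_rot_average L_def)
  show "integrable lborel (\<lambda>v. \<phi> v * thermoR g j F v)"
    unfolding fiber using lborel_pair_integral_fst(1)[OF int] by simp
  have "(LINT v|lborel. \<phi> v * thermoR g j F v) = (LINT p|lborel. a (fst p) * F (fst p) * g (snd p))"
    unfolding fiber using lborel_pair_integral_fst(2)[OF int] by (simp add: eq joint_def mult.assoc)
  also have "\<dots> = (LINT v|lborel. a v * F v)"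
    using lborel_integral_product(2)[OF a g_integrable] thermostat by (simp add: thermostat_density_def)
  finally show "(LINT v|lborel. \<phi> v * thermoR g j F v) = (LINT v|lborel. a v * F v)" .
qed

lemma thermostat_basis:
  "(axis j 1, 0) \<in> (Basis :: ((real^'n::{finite,linorder}) \<times> real) set)"
  "(0, 1) \<in> (Basis :: ((real^'n::{finite,linorder}) \<times> real) set)"
  by (auto simp: Basis_prod_def)

lemma thermoR_coordinate:
  shows "integrable lborel (\<lambda>v. v $ k * thermoR g j F v)"
    and "(LINT v|lborel. v $ k * thermoR g j F v) = (if k = j then 0 else LINT v|lborel. v $ k * F v)"
proof -
  note average = plane_rot_average_inner[of "(axis j 1, 0)" "(0, 1)" "(axis k 1, 0)",
      OF thermostat_basis _ thermostat_basis(1) joint_measurable integrable_joint_weighted]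
  have a: "integrable lborel (\<lambda>v. (if k = j then 0 else v $ k) * F v)"
    by (cases "k = j") (simp_all add: integrable_coordinate)
  from thermoR_moment[where \<phi>="\<lambda>v. v $ k" and a="\<lambda>v. if k = j then 0 else v $ k", OF _ _ a] average
  show "integrable lborel (\<lambda>v. v $ k * thermoR g j F v)"
    and "(LINT v|lborel. v $ k * thermoR g j F v) = (if k = j then 0 else LINT v|lborel. v $ k * F v)"
    by (simp_all add: inner_Pair_0 axis_eq_axis flip: vec_nth_eq_inner_axis)
qed

lemma thermoR_coordinate_mult:
  assumes "k \<noteq> l"
  shows "integrable lborel (\<lambda>v. v $ k * v $ l * thermoR g j F v)"
    and "(LINT v|lborel. v $ k * v $ l * thermoR g j F v)
           = (if k = j \<or> l = j then 0 else LINT v|lborel. v $ k * v $ l * F v)"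
proof -
  note average = plane_rot_average_inner_mult[of "(axis j 1, 0)" "(0, 1)" "(axis k 1, 0)" "(axis l 1, 0)",
      OF thermostat_basis _ thermostat_basis(1) thermostat_basis(1) _ joint_measurable
      integrable_joint_weighted]
  have a: "integrable lborel (\<lambda>v. (if k = j \<or> l = j then 0 else v $ k * v $ l) * F v)"
    by (cases "k = j \<or> l = j") (simp_all add: integrable_coordinate_mult)
  from thermoR_moment[where \<phi>="\<lambda>v. v $ k * v $ l" and a="\<lambda>v. if k = j \<or> l = j then 0 else v $ k * v $ l",
      OF _ _ a] average assms
  show "integrable lborel (\<lambda>v. v $ k * v $ l * thermoR g j F v)"
    and "(LINT v|lborel. v $ k * v $ l * thermoR g j F v)
           = (if k = j \<or> l = j then 0 else LINT v|lborel. v $ k * v $ l * F v)"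
    by (simp_all add: inner_Pair_0 axis_eq_axis mult.assoc flip: vec_nth_eq_inner_axis)
qed

lemma kac_gen_coordinate:
  "(LINT v|lborel. v $ k * kac_gen lam \<mu> g F v) = - moment_decay_rate lam \<mu> {k} * (LINT v|lborel. v $ k * F v)"
  by (rule integral_mult_kac_gen[OF integrable_coordinate kacQ_coordinate thermoR_coordinate(1)])
    (simp add: thermoR_coordinate(2))

lemma kac_gen_coordinate_mult:
  assumes "k \<noteq> l"
  shows "(LINT v|lborel. v $ k * v $ l * kac_gen lam \<mu> g F v)
           = - moment_decay_rate lam \<mu> {k, l} * (LINT v|lborel. v $ k * v $ l * F v)"
  using integral_mult_kac_gen[where \<phi>="\<lambda>v. v $ k * v $ l", OF integrable_coordinate_mult
      kacQ_coordinate_mult[OF assms] thermoR_coordinate_mult(1)[OF assms]]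
    thermoR_coordinate_mult(2)[OF assms]
  by (auto simp: mult.assoc)

end

section \<open>Moment equations along solutions\<close>

lemma abs_integral_mult_le_weighted:
  fixes f \<phi> w :: "'a::euclidean_space \<Rightarrow> real"
  assumes [measurable]: "w \<in> borel_measurable borel" "\<phi> \<in> borel_measurable borel"
    and \<phi>: "\<And>v. \<bar>\<phi> v\<bar> \<le> w v" and w_pos: "\<And>v. 0 < w v" and f: "integrable lborel (\<lambda>v. w v * f v)"
  shows "\<bar>LINT v|lborel. \<phi> v * f v\<bar> \<le> (LINT v|lborel. w v * \<bar>f v\<bar>)"
proof (rule integral_abs_bound_integral)
  show "integrable lborel (\<lambda>v. \<phi> v * f v)"
    by (rule integrable_mult_weighted[OF _ _ \<phi> w_pos f]) measurable
  show "integrable lborel (\<lambda>v. w v * \<bar>f v\<bar>)"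
    using integrable_abs[OF f] w_pos by (simp add: abs_mult less_imp_le)
  show "\<bar>\<phi> v * f v\<bar> \<le> w v * \<bar>f v\<bar>" for v
    using \<phi>[of v] by (simp add: abs_mult mult_right_mono)
qed

lemma has_real_derivative_weighted_moment:
  fixes F :: "real \<Rightarrow> 'a::euclidean_space \<Rightarrow> real" and G \<phi> w :: "'a \<Rightarrow> real"
  assumes [measurable]: "w \<in> borel_measurable borel" "\<phi> \<in> borel_measurable borel"
    and w_pos: "\<And>v. 0 < w v" and \<phi>: "\<And>v. \<bar>\<phi> v\<bar> \<le> w v"
    and F: "\<And>s. s \<in> T \<Longrightarrow> integrable lborel (\<lambda>v. w v * F s v)"
    and G: "integrable lborel (\<lambda>v. w v * G v)" and t: "t \<in> T"
    and lim: "((\<lambda>s. (LINT v|lborel. w v * \<bar>F s v - F t v - (s - t) * G v\<bar>) / \<bar>s - t\<bar>) \<longlongrightarrow> 0)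
                (at t within T)"
  shows "((\<lambda>s. LINT v|lborel. \<phi> v * F s v) has_real_derivative (LINT v|lborel. \<phi> v * G v))
           (at t within T)"
proof -
  define m where "m s = (LINT v|lborel. \<phi> v * F s v)" for s
  define D where "D = (LINT v|lborel. \<phi> v * G v)"
  have bound: "\<bar>(m s - m t) / (s - t) - D\<bar>
      \<le> (LINT v|lborel. w v * \<bar>F s v - F t v - (s - t) * G v\<bar>) / \<bar>s - t\<bar>"
    if s: "s \<in> T" "s \<noteq> t" for s
  proof -
    have "integrable lborel (\<lambda>v. \<phi> v * f v)" if "integrable lborel (\<lambda>v. w v * f v)" for f
      by (rule integrable_mult_weighted[OF _ _ \<phi> w_pos that]) measurable
    then have "m s - m t - (s - t) * D
        = (LINT v|lborel. \<phi> v * F s v - \<phi> v * F t v - (s - t) * (\<phi> v * G v))"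
      using F[OF s(1)] F[OF t] G by (simp add: m_def D_def)
    also have "\<dots> = (LINT v|lborel. \<phi> v * (F s v - F t v - (s - t) * G v))"
      by (simp add: algebra_simps)
    also have "\<bar>\<dots>\<bar> \<le> (LINT v|lborel. w v * \<bar>F s v - F t v - (s - t) * G v\<bar>)"
      using F[OF s(1)] F[OF t] G
      by (intro abs_integral_mult_le_weighted[OF _ _ \<phi> w_pos]) (simp_all add: algebra_simps)
    finally have "\<bar>m s - m t - (s - t) * D\<bar> / \<bar>s - t\<bar>
        \<le> (LINT v|lborel. w v * \<bar>F s v - F t v - (s - t) * G v\<bar>) / \<bar>s - t\<bar>"
      by (rule divide_right_mono) simp
    moreover have "(m s - m t) / (s - t) - D = (m s - m t - (s - t) * D) / (s - t)"
      using s by (simp add: field_simps)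
    ultimately show ?thesis
      by (simp only: abs_divide)
  qed
  have "((\<lambda>s. (m s - m t) / (s - t) - D) \<longlongrightarrow> 0) (at t within T)"
    by (rule Lim_null_comparison[OF _ lim])
      (auto simp: eventually_at_filter bound intro: always_eventually)
  then show ?thesis
    unfolding has_field_derivative_iff m_def D_def by (simp add: Lim_null[symmetric])
qed

lemma linear_ode_solution:
  fixes m :: "real \<Rightarrow> real"
  assumes "\<And>t. t \<ge> 0 \<Longrightarrow> (m has_real_derivative - c * m t) (at t within {0..})" and "t \<ge> 0"
  shows "m t = m 0 * exp (- c * t)"
proof -
  have "((\<lambda>t. m t * exp (c * t)) has_real_derivative 0) (at t within {0..})" if "t \<in> {0..}" for t
    using assms(1) that
    by (auto intro!: derivative_eq_intros simp: algebra_simps)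
  then obtain C where "\<forall>x\<in>{0..}. m x * exp (c * x) = C"
    using has_field_derivative_zero_constant[of "{0::real..}" "\<lambda>t. m t * exp (c * t)"] by auto
  then have "m t * exp (c * t) = m 0"
    using assms(2) by (metis atLeast_iff exp_zero mult_1_right mult_zero_right order_refl)
  then show ?thesis
    by (simp add: exp_minus field_simps)
qed

lemma kac_solution_thermostatted_density:
  assumes "kac_solution lam \<mu> g F" "thermostat_density g" "t \<ge> 0"
  shows "thermostatted_density (F t) g"
  using assms by unfold_locales (auto simp: kac_solution_def distrib_right)

lemma kac_solution_moment_derivative:
  assumes sol: "kac_solution lam \<mu> g F" and t: "t \<ge> 0"
    and [measurable]: "\<phi> \<in> borel_measurable borel" and \<phi>: "\<And>v. \<bar>\<phi> v\<bar> \<le> 1 + (norm v)\<^sup>2"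
  shows "((\<lambda>s. LINT v|lborel. \<phi> v * F s v) has_real_derivative
           (LINT v|lborel. \<phi> v * kac_gen lam \<mu> g (F t) v)) (at t within {0..})"
  using sol t unfolding kac_solution_def
  by (intro has_real_derivative_weighted_moment[OF _ _ _ \<phi>])
    (auto simp: distrib_right add_pos_nonneg)

lemma kac_moment_decay:
  assumes sol: "kac_solution lam \<mu> g F"
    and [measurable]: "\<phi> \<in> borel_measurable borel" and \<phi>: "\<And>v. \<bar>\<phi> v\<bar> \<le> 1 + (norm v)\<^sup>2"
    and closed: "\<And>s. s \<ge> 0 \<Longrightarrow>
      (LINT v|lborel. \<phi> v * kac_gen lam \<mu> g (F s) v) = - c * (LINT v|lborel. \<phi> v * F s v)"
    and c: "\<mu> \<le> c" and t: "t \<ge> 0"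
  shows "\<bar>LINT v|lborel. \<phi> v * F t v\<bar> \<le> \<bar>LINT v|lborel. \<phi> v * F 0 v\<bar> * exp (- \<mu> * t)"
proof -
  have "(LINT v|lborel. \<phi> v * F t v) = (LINT v|lborel. \<phi> v * F 0 v) * exp (- c * t)"
    using kac_solution_moment_derivative[OF sol _ _ \<phi>] closed
    by (intro linear_ode_solution[OF _ t]) auto
  moreover have "exp (- c * t) \<le> exp (- \<mu> * t)"
    using c t by (simp add: mult_right_mono)
  ultimately show ?thesis
    by (simp add: abs_mult mult_left_mono)
qed

lemma finite_family_exp_bound:
  fixes m :: "'i::finite \<Rightarrow> real \<Rightarrow> real"
  assumes "\<And>k t. P k \<Longrightarrow> t \<ge> 0 \<Longrightarrow> \<bar>m k t\<bar> \<le> \<bar>m k 0\<bar> * exp (- r * t)"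
  shows "\<exists>C. \<forall>k. P k \<longrightarrow> (\<forall>t\<ge>0. \<bar>m k t\<bar> \<le> C * exp (- r * t))"
proof (intro exI allI impI)
  fix k t assume "P k" "0 \<le> (t::real)"
  have "\<bar>m k 0\<bar> \<le> (\<Sum>i\<in>UNIV. \<bar>m i 0\<bar>)"
    by (rule member_le_sum) auto
  then show "\<bar>m k t\<bar> \<le> (\<Sum>i\<in>UNIV. \<bar>m i 0\<bar>) * exp (- r * t)"
    using assms[OF \<open>P k\<close> \<open>0 \<le> t\<close>] by (meson exp_ge_zero mult_right_mono order_trans)
qed

theorem lemma2:
  fixes F :: "real \<Rightarrow> real^('n::{finite,linorder}) \<Rightarrow> real"
    and lam \<mu> :: real and g :: "real \<Rightarrow> real"
  assumes "CARD('n) \<ge> 2" and "lam > 0" and "\<mu> > 0"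
    and "thermostat_density g"
    and "kac_solution lam \<mu> g F"
  shows "(\<exists>r > \<mu> / 2. \<exists>C. \<forall>k. \<forall>t\<ge>0.
            \<bar>LINT v|lborel. v $ k * F t v\<bar> \<le> C * exp (- r * t))
       \<and> (\<exists>r > \<mu> / 2. \<exists>C. \<forall>k l. k \<noteq> l \<longrightarrow> (\<forall>t\<ge>0.
            \<bar>LINT v|lborel. v $ k * v $ l * F t v\<bar> \<le> C * exp (- r * t)))"
proof -
  \<comment> \<open>\<open>N \<ge> 2\<close> is not needed: for smaller \<open>N\<close> the junk value \<open>1 / (N choose 2) = 0\<close> makes
    \<open>Q\<close> vanish, and the rates remain \<open>\<ge> \<mu>\<close>.\<close>
  note sol = assms(5) and state = kac_solution_thermostatted_density[OF assms(5,4)]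
  have rate: "\<mu> \<le> moment_decay_rate lam \<mu> S" if "S \<noteq> {}" for S :: "'n set"
    using moment_decay_rate_ge[OF _ _ that] assms(2,3) by simp
  have "\<bar>LINT v|lborel. v $ k * F t v\<bar> \<le> \<bar>LINT v|lborel. v $ k * F 0 v\<bar> * exp (- \<mu> * t)"
    if "t \<ge> 0" for k t
    by (rule kac_moment_decay[OF sol _ abs_component_le_weight _ rate[of "{k}"] that])
      (simp_all add: thermostatted_density.kac_gen_coordinate[OF state])
  then obtain C1 where C1: "\<forall>k. \<forall>t\<ge>0. \<bar>LINT v|lborel. v $ k * F t v\<bar> \<le> C1 * exp (- \<mu> * t)"
    using finite_family_exp_bound[of "\<lambda>_. True" "\<lambda>k t. LINT v|lborel. v $ k * F t v" \<mu>] by auto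
  have "\<bar>LINT v|lborel. v $ k * v $ l * F t v\<bar> \<le> \<bar>LINT v|lborel. v $ k * v $ l * F 0 v\<bar> * exp (- \<mu> * t)"
    if "k \<noteq> l" "t \<ge> 0" for k l t
    by (rule kac_moment_decay[OF sol _ abs_component_mult_le_weight _ rate[of "{k, l}"] \<open>t \<ge> 0\<close>])
      (simp_all add: thermostatted_density.kac_gen_coordinate_mult[OF state \<open>k \<noteq> l\<close>])
  then obtain C2 where "\<forall>p. fst p \<noteq> snd p \<longrightarrow> (\<forall>t\<ge>0.
      \<bar>LINT v|lborel. v $ fst p * v $ snd p * F t v\<bar> \<le> C2 * exp (- \<mu> * t))"
    using finite_family_exp_bound[of "\<lambda>p. fst p \<noteq> snd p"
        "\<lambda>p t. LINT v|lborel. v $ fst p * v $ snd p * F t v" \<mu>] by auto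
  then have "\<forall>k l. k \<noteq> l \<longrightarrow> (\<forall>t\<ge>0. \<bar>LINT v|lborel. v $ k * v $ l * F t v\<bar> \<le> C2 * exp (- \<mu> * t))"
    by auto
  moreover have "\<mu> / 2 < \<mu>"
    using assms(3) by simp
  ultimately show ?thesis
    using C1 by blast
qed

end
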